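(* For every positive integer $k$, $f(k)\geq \frac{k(k-2)}{3}$.
   Context: A $k$-colouring of the edges of the complete graph $K_n$ (colours from $[k]=\{1,\dots,k\}$) is called connected if for each colour $i\in[k]$ the edges of colour $i$ form a connected spanning subgraph of $K_n$ (i.e. a connected graph on all $n$ vertices). A triangle is multicoloured if its three edges have three distinct colours; its colour set is the set of these three colours. $f(k)$ denotes the minimum, over all $n$ and all connected $k$-colourings of $K_n$, of the number of distinct $3$-sets of colours that occur as colour sets of multicoloured triangles. *)

theory Defs
  imports Complex_Main
begin

definition colouring :: "nat \<Rightarrow> nat \<Rightarrow> (nat \<Rightarrow> nat \<Rightarrow> nat) \<Rightarrow> bool" where
  "colouring k n c \<longleftrightarrow>
     (\<forall>x<n. \<forall>y<n. x \<noteq> y \<longrightarrow> c x y = c y x \<and> c x y \<in> {1..k})"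

definition colour_edges :: "nat \<Rightarrow> (nat \<Rightarrow> nat \<Rightarrow> nat) \<Rightarrow> nat \<Rightarrow> (nat \<times> nat) set" where
  "colour_edges n c i = {(x, y). x < n \<and> y < n \<and> x \<noteq> y \<and> c x y = i}"

definition colour_connected :: "nat \<Rightarrow> (nat \<Rightarrow> nat \<Rightarrow> nat) \<Rightarrow> nat \<Rightarrow> bool" where
  "colour_connected n c i \<longleftrightarrow> (\<forall>u<n. \<forall>v<n. (u, v) \<in> (colour_edges n c i)\<^sup>*)"

definition connected_colouring :: "nat \<Rightarrow> nat \<Rightarrow> (nat \<Rightarrow> nat \<Rightarrow> nat) \<Rightarrow> bool" where
  "connected_colouring k n c \<longleftrightarrow> colouring k n c \<and> (\<forall>i\<in>{1..k}. colour_connected n c i)"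

definition multicoloured_sets :: "nat \<Rightarrow> (nat \<Rightarrow> nat \<Rightarrow> nat) \<Rightarrow> nat set set" where
  "multicoloured_sets n c =
     {{c x y, c y z, c x z} | x y z. x < n \<and> y < n \<and> z < n \<and>
        x \<noteq> y \<and> y \<noteq> z \<and> x \<noteq> z \<and> card {c x y, c y z, c x z} = 3}"

definition f :: "nat \<Rightarrow> nat" where
  "f k = Inf {card (multicoloured_sets n c) | n c. 2 \<le> n \<and> connected_colouring k n c}"

end

theory Submission
  imports Defs
begin

text \<open>
  Fix a connected \<open>k\<close>-colouring of \<open>K\<^sub>n\<close> and a colour \<open>i\<close>. For any split of the remaining
  colours into a nonempty set \<open>S\<close> and a nonempty rest, merging the colours into the three
  classes \<open>{i}\<close>, \<open>S\<close> and the rest gives a connected 3-colouring, and a connected 3-colouring of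
  \<open>K\<^sub>n\<close> (\<open>n \<ge> 2\<close>) has a rainbow triangle: in a rainbow-free colouring, adding a vertex to a graph
  with a disconnected colour class leaves some class disconnected. The resulting triangle is a
  multicoloured triangle through \<open>i\<close> crossing the split, so the colour sets \<open>{i, a, b}\<close>, read as
  edges \<open>ab\<close>, form a connected graph on the other \<open>k - 1\<close> colours; hence at least \<open>k - 2\<close> colour
  sets contain \<open>i\<close>. Summing over \<open>i\<close> counts every colour set three times. The infimum defining
  \<open>f k\<close> is attained because \<open>K\<^sub>2\<^sub>k\<close> has a connected \<open>k\<close>-colouring.
\<close>

section \<open>Rainbow-free colourings with three colours\<close>

definition rainbow_free :: "nat \<Rightarrow> (nat \<Rightarrow> nat \<Rightarrow> nat) \<Rightarrow> bool" where
  "rainbow_free n c \<longleftrightarrow> (\<forall>x<n. \<forall>y<n. \<forall>z<n. x \<noteq> y \<longrightarrow> y \<noteq> z \<longrightarrow> x \<noteq> z \<longrightarrow>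
      c x y = c y z \<or> c y z = c x z \<or> c x y = c x z)"

lemma third_colour_exists: "\<exists>d::nat. d \<in> {1..3} \<and> d \<noteq> a \<and> d \<noteq> b"
  by (rule exI[of _ "if 1 \<notin> {a, b} then 1 else if 2 \<notin> {a, b} then 2 else 3"]) auto

lemma third_colour_unique:
  fixes a b d d' :: nat
  assumes "{a, b, d, d'} \<subseteq> {1..3}" "a \<noteq> b" "d \<notin> {a, b}" "d' \<notin> {a, b}"
  shows "d = d'"
  using assms by auto

lemma colouring_sym: "colouring k n c \<Longrightarrow> x < n \<Longrightarrow> y < n \<Longrightarrow> x \<noteq> y \<Longrightarrow> c x y = c y x"
  by (simp add: colouring_def)

lemma colouring_range: "colouring k n c \<Longrightarrow> x < n \<Longrightarrow> y < n \<Longrightarrow> x \<noteq> y \<Longrightarrow> c x y \<in> {1..k}"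
  by (simp add: colouring_def)

lemma colouring_restrict: "colouring k (Suc n) c \<Longrightarrow> colouring k n c"
  by (simp add: colouring_def)

lemma rainbow_free_restrict: "rainbow_free (Suc n) c \<Longrightarrow> rainbow_free n c"
  by (simp add: rainbow_free_def)

lemma colour_edge_reach:
  "x < n \<Longrightarrow> y < n \<Longrightarrow> x \<noteq> y \<Longrightarrow> c x y = r \<Longrightarrow> (x, y) \<in> (colour_edges n c r)\<^sup>*"
  by (auto simp: colour_edges_def)

lemma colour_reach_sym:
  assumes "colouring k n c" "(x, y) \<in> (colour_edges n c r)\<^sup>*"
  shows "(y, x) \<in> (colour_edges n c r)\<^sup>*"
proof -
  have "sym (colour_edges n c r)"
    using assms(1) by (auto simp: sym_def colour_edges_def colouring_def)
  then show ?thesis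
    using assms(2) by (meson sym_rtrancl symD)
qed

lemma colour_reach_bounded:
  assumes "(x, y) \<in> (colour_edges n c r)\<^sup>*"
  shows "x = y \<or> x < n \<and> y < n"
  using assms by (induction rule: rtrancl_induct) (auto simp: colour_edges_def)

lemma rainbow_free_colour_constant_on_component:
  assumes col: "colouring k n c" and rf: "rainbow_free n c"
    and path: "(x, x') \<in> (colour_edges n c r)\<^sup>*"
    and apart: "(y, x) \<notin> (colour_edges n c r)\<^sup>*" and y: "y < n"
  shows "c y x = c y x'"
  using path
proof (induction rule: rtrancl_induct)
  case (step x1 x2)
  let ?R = "(colour_edges n c r)\<^sup>*"
  have edge: "x1 < n" "x2 < n" "x1 \<noteq> x2" "c x1 x2 = r"
    using step.hyps(2) by (auto simp: colour_edges_def)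
  have "(y, x1) \<notin> ?R"
    using apart step.hyps(1) colour_reach_sym[OF col] by (meson rtrancl_trans)
  moreover have "(y, x2) \<notin> ?R"
    using calculation step.hyps(2) colour_reach_sym[OF col r_into_rtrancl] by (meson rtrancl_trans)
  ultimately have "y \<noteq> x1" "y \<noteq> x2" "c y x1 \<noteq> r" "c y x2 \<noteq> r"
    using colour_edge_reach[OF y edge(1)] colour_edge_reach[OF y edge(2)] by auto
  then have "c y x1 = c y x2"
    using rf y edge unfolding rainbow_free_def by metis
  then show ?case using step.IH by simp
qed simp

lemma colour_component_meets_new_vertex:
  assumes conn: "colour_connected (Suc n) c r" and x: "x < n"
  shows "\<exists>x'. (x, x') \<in> (colour_edges n c r)\<^sup>* \<and> c x' n = r"
proof -
  let ?R = "(colour_edges n c r)\<^sup>*"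
  have "z < n \<and> (x, z) \<in> ?R \<or> (\<exists>x'. (x, x') \<in> ?R \<and> c x' n = r)"
    if "(x, z) \<in> (colour_edges (Suc n) c r)\<^sup>*" for z
    using that
  proof (induction rule: rtrancl_induct)
    case (step z w)
    have zw: "z < Suc n" "w < Suc n" "z \<noteq> w" "c z w = r"
      using step.hyps(2) by (auto simp: colour_edges_def)
    show ?case
    proof (cases "w < n")
      case True
      then show ?thesis
        using step.IH zw colour_edge_reach[of z n w c r] by (meson rtrancl_trans)
    next
      case False
      then show ?thesis
        using step.IH zw by (metis less_antisym)
    qed
  qed (use x in simp)
  moreover have "(x, n) \<in> (colour_edges (Suc n) c r)\<^sup>*"
    using conn x unfolding colour_connected_def by simp
  ultimately show ?thesis by blast
qed

lemma rainbow_free_uniform_cross_colour: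
  assumes col: "colouring 3 n c" and rf: "rainbow_free n c" and r: "r \<in> {1..3}"
    and disc: "\<not> colour_connected n c r"
  shows "\<exists>a\<in>{1..3}. a \<noteq> r \<and>
    (\<forall>y<n. \<exists>y'<n. (y, y') \<notin> (colour_edges n c r)\<^sup>* \<and> c y y' = a)"
proof -
  let ?R = "(colour_edges n c r)\<^sup>*"
  obtain p q where pq: "p < n" "q < n" "(p, q) \<notin> ?R"
    using disc unfolding colour_connected_def by blast
  then have cpq: "c p q \<in> {1..3}" "c p q \<noteq> r"
    using colouring_range[OF col] colour_edge_reach[of p n q] by (metis rtrancl.rtrancl_refl)+
  show ?thesis
  proof (cases "\<forall>y<n. \<exists>y'<n. (y, y') \<notin> ?R \<and> c y y' = c p q")
    case True
    then show ?thesis using cpq by blast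
  next
    case False
    then obtain y0 where y0: "y0 < n"
      and avoid: "\<And>y'. y' < n \<Longrightarrow> (y0, y') \<notin> ?R \<Longrightarrow> c y0 y' \<noteq> c p q"
      by blast
    obtain a :: nat where a: "a \<in> {1..3}" "a \<noteq> r" "a \<noteq> c p q"
      using third_colour_exists by blast
    have y0a: "c y0 y' = a" if "y' < n" "(y0, y') \<notin> ?R" for y'
    proof -
      have "y0 \<noteq> y'" using that by auto
      then have "c y0 y' \<in> {1..3}" "c y0 y' \<noteq> r"
        using colouring_range[OF col] colour_edge_reach y0 that by blast+
      then show ?thesis
        using third_colour_unique[of r "c p q" "c y0 y'" a] avoid[OF that] r a cpq by auto
    qed
    obtain z where z: "z < n" "(y0, z) \<notin> ?R"
      using pq colour_reach_sym[OF col] by (meson rtrancl_trans)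
    have "\<exists>y'<n. (y, y') \<notin> ?R \<and> c y y' = a" if y: "y < n" for y
    proof (cases "(y, y0) \<in> ?R")
      case False
      then have "c y y0 = a"
        using y0a[of y] colouring_sym[OF col y y0] colour_reach_sym[OF col] y by force
      then show ?thesis using False y0 by blast
    next
      case True
      then have "(y, z) \<notin> ?R" "(z, y0) \<notin> ?R"
        using z colour_reach_sym[OF col] by (meson rtrancl_trans)+
      then have "c z y = a"
        using rainbow_free_colour_constant_on_component[OF col rf colour_reach_sym[OF col True]]
          y0a[OF z] colouring_sym[OF col z(1) y0] z by force
      then show ?thesis
        using \<open>(y, z) \<notin> ?R\<close> colouring_sym[OF col y z(1)] z(1) by force
    qed
    with a show ?thesis by blast
  qed
qed

lemma rainbow_free_extension_has_disconnected_colour: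
  assumes col: "colouring 3 (Suc n) c" and rf: "rainbow_free (Suc n) c"
    and r: "r \<in> {1..3}" and disc: "\<not> colour_connected n c r"
  shows "\<exists>d\<in>{1..3}. \<not> colour_connected (Suc n) c d"
proof (rule ccontr)
  assume "\<not> ?thesis"
  then have conn: "\<And>d. d \<in> {1..3} \<Longrightarrow> colour_connected (Suc n) c d" by blast
  let ?R = "(colour_edges n c r)\<^sup>*"
  note col' = colouring_restrict[OF col] and rf' = rainbow_free_restrict[OF rf]
  \<comment> \<open>Each \<open>y < n\<close> sees another colour-\<open>r\<close> component in a fixed colour \<open>a\<close>; that component is
    joined to \<open>n\<close> in colour \<open>r\<close>, so \<open>c n y \<in> {r, a}\<close> and \<open>n\<close> is isolated in the third colour.\<close>
  obtain a where a: "a \<in> {1..3}" "a \<noteq> r"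
    and cross: "\<And>y. y < n \<Longrightarrow> \<exists>y'<n. (y, y') \<notin> ?R \<and> c y y' = a"
    using rainbow_free_uniform_cross_colour[OF col' rf' r disc] by blast
  have new_vertex_colours: "c n y = r \<or> c n y = a" if y: "y < n" for y
  proof -
    obtain y' where y': "y' < n" "(y, y') \<notin> ?R" "c y y' = a"
      using cross y by blast
    obtain x' where x': "(y', x') \<in> ?R" "c x' n = r"
      using colour_component_meets_new_vertex conn r y' by blast
    have "x' < n" using colour_reach_bounded[OF x'(1)] y' by auto
    have "(y, x') \<notin> ?R"
      using y'(2) rtrancl_trans[OF _ colour_reach_sym[OF col' x'(1)]] by blast
    then have "y \<noteq> x'" by auto
    have "c y x' = a"
      using rainbow_free_colour_constant_on_component[OF col' rf' x'(1) y'(2) y] y' by simp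
    moreover have "c n x' = r"
      using x'(2) colouring_sym[OF col, of x' n] \<open>x' < n\<close> by simp
    moreover have "c n x' = c x' y \<or> c x' y = c n y \<or> c n x' = c n y"
      using rf[unfolded rainbow_free_def, rule_format, of n x' y] \<open>x' < n\<close> y \<open>y \<noteq> x'\<close>
      by auto
    ultimately show ?thesis
      using colouring_sym[OF col', of x' y] \<open>x' < n\<close> y \<open>y \<noteq> x'\<close> a(2) by auto
  qed
  obtain d :: nat where d: "d \<in> {1..3}" "d \<noteq> r" "d \<noteq> a"
    using third_colour_exists by blast
  have "n \<noteq> 0" using disc unfolding colour_connected_def by auto
  moreover have "(n, 0) \<in> (colour_edges (Suc n) c d)\<^sup>*"
    using conn d unfolding colour_connected_def by simp
  ultimately obtain w where "(n, w) \<in> colour_edges (Suc n) c d"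
    by (metis converse_rtranclE)
  then have "w < n" "c n w = d" by (auto simp: colour_edges_def)
  then show False using new_vertex_colours d by auto
qed

lemma rainbow_free_has_disconnected_colour:
  assumes "2 \<le> n" "colouring 3 n c" "rainbow_free n c"
  shows "\<exists>d\<in>{1..3}. \<not> colour_connected n c d"
  using assms
proof (induction n rule: nat_induct_at_least)
  case base
  obtain d :: nat where d: "d \<in> {1..3}" "d \<noteq> c 0 1"
    using third_colour_exists by blast
  have "c x y \<noteq> d" if "x < 2" "y < 2" "x \<noteq> y" for x y
    using that d colouring_sym[OF base(1), of 1 0] by (auto simp: less_2_cases_iff)
  then have "colour_edges 2 c d = {}"
    by (auto simp: colour_edges_def)
  then have "(0, 1) \<notin> (colour_edges 2 c d)\<^sup>*"
    by simp
  then have "\<not> colour_connected 2 c d"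
    unfolding colour_connected_def by fastforce
  with d show ?case by blast
next
  case (Suc n)
  then obtain r where "r \<in> {1..3}" "\<not> colour_connected n c r"
    using colouring_restrict rainbow_free_restrict by blast
  then show ?case
    using rainbow_free_extension_has_disconnected_colour Suc.prems by blast
qed

section \<open>Multicoloured triangles through a fixed colour\<close>

lemma colour_connected_mono:
  assumes "colour_connected n c i"
    and "\<And>x y. x < n \<Longrightarrow> y < n \<Longrightarrow> x \<noteq> y \<Longrightarrow> c x y = i \<Longrightarrow> c' x y = j"
  shows "colour_connected n c' j"
proof -
  have "colour_edges n c i \<subseteq> colour_edges n c' j"
    using assms(2) unfolding colour_edges_def by auto
  then show ?thesis
    using assms(1) rtrancl_mono unfolding colour_connected_def by blast
qed

lemma multicoloured_triangle_across_cut: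
  assumes cc: "connected_colouring k n c" and n: "2 \<le> n" and i: "i \<in> {1..k}"
    and S: "S \<subseteq> {1..k} - {i}" "S \<noteq> {}" "S \<noteq> {1..k} - {i}"
  shows "\<exists>T\<in>{T \<in> multicoloured_sets n c. i \<in> T}. \<exists>b\<in>{1..k} - {i} - S.
           b \<in> T \<and> T \<subseteq> {i} \<union> insert b S"
proof -
  obtain a b where a: "a \<in> S" and b: "b \<in> {1..k} - {i} - S"
    using S by blast
  have col: "colouring k n c" and conn: "\<And>j. j \<in> {1..k} \<Longrightarrow> colour_connected n c j"
    using cc unfolding connected_colouring_def by auto
  define merge where "merge j = (if j = i then 1 else if j \<in> S then 2 else 3 :: nat)" for j
  define c' where "c' x y = merge (c x y)" for x y
  have "colouring 3 n c'"
    using col unfolding colouring_def c'_def merge_def by auto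
  moreover have "colour_connected n c' d" if d: "d \<in> {1..3}" for d
  proof -
    have "a \<in> {1..k}" "a \<noteq> i" using a S(1) by auto
    consider "d = 1" | "d = 2" | "d = 3" using d by fastforce
    then show ?thesis
    proof cases
      case 1
      show ?thesis unfolding 1
        by (rule colour_connected_mono[OF conn[OF i]]) (simp add: c'_def merge_def)
    next
      case 2
      show ?thesis unfolding 2
        by (rule colour_connected_mono[OF conn[OF \<open>a \<in> {1..k}\<close>]])
          (use a \<open>a \<noteq> i\<close> in \<open>simp add: c'_def merge_def\<close>)
    next
      case 3
      show ?thesis unfolding 3
        by (rule colour_connected_mono[OF conn, of b]) (use b in \<open>auto simp: c'_def merge_def\<close>)
    qed
  qed
  ultimately obtain x y z where xyz: "x < n" "y < n" "z < n" "x \<noteq> y" "y \<noteq> z" "x \<noteq> z"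
    "c' x y \<noteq> c' y z" "c' y z \<noteq> c' x z" "c' x y \<noteq> c' x z"
    using rainbow_free_has_disconnected_colour[OF n] unfolding rainbow_free_def by blast
  define T where "T = {c x y, c y z, c x z}"
  have "c x y \<noteq> c y z" "c y z \<noteq> c x z" "c x y \<noteq> c x z"
    using xyz(7-9) unfolding c'_def by metis+
  then have "card T = 3" unfolding T_def by simp
  then have "T \<in> multicoloured_sets n c"
    unfolding multicoloured_sets_def T_def using xyz(1-6) by blast
  moreover have "i \<in> T"
    using xyz(7-9) unfolding T_def c'_def merge_def by (auto split: if_splits)
  moreover obtain b' where "b' \<in> T" "b' \<noteq> i" "b' \<notin> S"
    using xyz(7-9) unfolding T_def c'_def merge_def by (auto split: if_splits)
  moreover have "T \<subseteq> {1..k}"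
    using colouring_range[OF col] xyz(1-6) unfolding T_def by auto
  moreover have "T \<subseteq> {i} \<union> insert b' S"
    using xyz(7-9) \<open>b' \<in> T\<close> \<open>b' \<noteq> i\<close> \<open>b' \<notin> S\<close> unfolding T_def c'_def merge_def
    by (auto split: if_splits)
  ultimately show ?thesis by blast
qed

text \<open>For \<open>X = {}\<close> and \<open>F\<close> a set of edges this is the lower bound \<open>|V| - 1\<close> on the number of
  edges of a connected graph on \<open>V\<close>.\<close>

lemma card_family_crossing_cuts:
  assumes F: "finite F" and V: "finite V" "V \<inter> X = {}"
    and cross: "\<And>S. S \<subseteq> V \<Longrightarrow> S \<noteq> {} \<Longrightarrow> S \<noteq> V \<Longrightarrow>
                  \<exists>T\<in>F. \<exists>b\<in>V - S. b \<in> T \<and> T \<subseteq> X \<union> insert b S"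
  shows "card V \<le> card F + 1"
proof (cases "V = {}")
  case False
  have grow: "\<exists>S\<subseteq>V. card S = Suc m \<and> m \<le> card {T\<in>F. T \<subseteq> X \<union> S}" if "m < card V" for m
    using that
  proof (induction m)
    case 0
    from False obtain v where "v \<in> V" by blast
    then show ?case by (intro exI[of _ "{v}"]) auto
  next
    case (Suc m)
    then obtain S where S: "S \<subseteq> V" "card S = Suc m" "m \<le> card {T\<in>F. T \<subseteq> X \<union> S}"
      by auto
    then have "S \<noteq> {}" "S \<noteq> V" using Suc.prems by auto
    then obtain T b where T: "T \<in> F" "b \<in> V - S" "b \<in> T" "T \<subseteq> X \<union> insert b S"
      using cross S(1) by blast
    have "insert T {T\<in>F. T \<subseteq> X \<union> S} \<subseteq> {T\<in>F. T \<subseteq> X \<union> insert b S}"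
      using T by auto
    moreover have "T \<notin> {T\<in>F. T \<subseteq> X \<union> S}"
      using T V(2) by auto
    ultimately have "Suc m \<le> card {T\<in>F. T \<subseteq> X \<union> insert b S}"
      using S(3) F card_mono[of "{T\<in>F. T \<subseteq> X \<union> insert b S}" "insert T {T\<in>F. T \<subseteq> X \<union> S}"]
      by simp
    moreover have "card (insert b S) = Suc (Suc m)"
      using S T(2) V(1) finite_subset by fastforce
    ultimately show ?case
      using S(1) T(2) by (intro exI[of _ "insert b S"]) auto
  qed
  obtain S where "card V - 1 \<le> card {T\<in>F. T \<subseteq> X \<union> S}"
    using grow[of "card V - 1"] False V(1) by (metis card_gt_0_iff diff_less zero_less_one)
  moreover have "card {T\<in>F. T \<subseteq> X \<union> S} \<le> card F"
    using F by (intro card_mono) auto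
  ultimately show ?thesis by linarith
qed simp

lemma multicoloured_sets_bounded:
  assumes "colouring k n c" "T \<in> multicoloured_sets n c"
  shows "T \<subseteq> {1..k}" "card T = 3"
  using assms colouring_range[OF assms(1)] unfolding multicoloured_sets_def by auto

lemma finite_multicoloured_sets:
  assumes "colouring k n c"
  shows "finite (multicoloured_sets n c)"
  using multicoloured_sets_bounded[OF assms] finite_subset[of _ "Pow {1..k}"] by blast

lemma card_multicoloured_containing_colour:
  assumes cc: "connected_colouring k n c" and n: "2 \<le> n" and i: "i \<in> {1..k}"
  shows "k \<le> card {T \<in> multicoloured_sets n c. i \<in> T} + 2"
proof -
  have col: "colouring k n c" using cc unfolding connected_colouring_def by simp
  have "card ({1..k} - {i}) \<le> card {T \<in> multicoloured_sets n c. i \<in> T} + 1"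
    by (rule card_family_crossing_cuts[where X = "{i}"])
      (use finite_multicoloured_sets[OF col] multicoloured_triangle_across_cut[OF cc n i] in auto)
  then show ?thesis using i by simp
qed

lemma sum_card_multicoloured_containing_colour:
  assumes col: "colouring k n c"
  shows "(\<Sum>i\<in>{1..k}. card {T \<in> multicoloured_sets n c. i \<in> T}) = 3 * card (multicoloured_sets n c)"
proof (rule sum_multicount)
  show "\<forall>T\<in>multicoloured_sets n c. card {i \<in> {1..k}. i \<in> T} = 3"
  proof
    fix T assume "T \<in> multicoloured_sets n c"
    then have "T \<subseteq> {1..k}" "card T = 3"
      by (rule multicoloured_sets_bounded[OF col])+
    then have "{i \<in> {1..k}. i \<in> T} = T" by auto
    with \<open>card T = 3\<close> show "card {i \<in> {1..k}. i \<in> T} = 3" by simp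
  qed
qed (simp_all add: finite_multicoloured_sets[OF col])

lemma card_multicoloured_sets_lower_bound:
  assumes cc: "connected_colouring k n c" and n: "2 \<le> n"
  shows "k * k \<le> 3 * card (multicoloured_sets n c) + 2 * k"
proof -
  have col: "colouring k n c" using cc unfolding connected_colouring_def by simp
  have "k * k = (\<Sum>i\<in>{1..k}. k)" by simp
  also have "\<dots> \<le> (\<Sum>i\<in>{1..k}. card {T \<in> multicoloured_sets n c. i \<in> T} + 2)"
    by (rule sum_mono) (rule card_multicoloured_containing_colour[OF cc n])
  also have "\<dots> = 3 * card (multicoloured_sets n c) + 2 * k"
    unfolding sum.distrib sum_card_multicoloured_containing_colour[OF col] by simp
  finally show ?thesis .
qed

section \<open>A connected colouring of \<open>K\<^sub>2\<^sub>k\<close>\<close>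

text \<open>Colour \<open>m + 1\<close> forms a spanning double star with centres \<open>m\<close> and \<open>k + m\<close>.\<close>

definition double_star_colouring :: "nat \<Rightarrow> nat \<Rightarrow> nat \<Rightarrow> nat" where
  "double_star_colouring k x y =
     (if (x < k) = (y < k) then max (x mod k) (y mod k) else min (x mod k) (y mod k)) + 1"

lemma double_star_colouring_colouring:
  assumes "1 \<le> k"
  shows "colouring k (2 * k) (double_star_colouring k)"
  unfolding colouring_def
proof (intro allI impI conjI)
  fix x y
  show "double_star_colouring k x y = double_star_colouring k y x"
    unfolding double_star_colouring_def by (simp add: max.commute min.commute)
  have "max (x mod k) (y mod k) < k" "min (x mod k) (y mod k) < k"
    using assms by (simp_all add: min_less_iff_disj)
  then show "double_star_colouring k x y \<in> {1..k}"
    unfolding double_star_colouring_def by (simp add: Suc_le_eq)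
qed

lemma double_star_colour_class_connected:
  assumes m: "m < k"
  shows "colour_connected (2 * k) (double_star_colouring k) (m + 1)"
proof -
  let ?E = "colour_edges (2 * k) (double_star_colouring k) (m + 1)"
  have hub: "(k + m, m) \<in> ?E"
    using m by (auto simp: colour_edges_def double_star_colouring_def)
  have to_hub: "(u, m) \<in> ?E\<^sup>*" if u: "u < 2 * k" for u
  proof -
    have "u = m \<or> (u, m) \<in> ?E \<or> (u, k + m) \<in> ?E"
    proof (cases "u < k")
      case True
      then show ?thesis
        using m by (cases "u \<le> m") (auto simp: colour_edges_def double_star_colouring_def)
    next
      case False
      then obtain j where j: "u = k + j" "j < k"
        using u by (metis add_less_imp_less_left le_Suc_ex mult_2 not_less)
      then show ?thesis
        using m by (cases "m \<le> j") (auto simp: colour_edges_def double_star_colouring_def)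
    qed
    then show ?thesis
      using hub by (meson converse_rtrancl_into_rtrancl r_into_rtrancl rtrancl.rtrancl_refl)
  qed
  have col: "colouring k (2 * k) (double_star_colouring k)"
    using m by (intro double_star_colouring_colouring) simp
  show ?thesis
    unfolding colour_connected_def
    using to_hub colour_reach_sym[OF col] by (meson rtrancl_trans)
qed

lemma double_star_colouring_connected:
  assumes "1 \<le> k"
  shows "connected_colouring k (2 * k) (double_star_colouring k)"
proof -
  have "colour_connected (2 * k) (double_star_colouring k) i" if "i \<in> {1..k}" for i
    using double_star_colour_class_connected[of "i - 1" k] that by auto
  then show ?thesis
    using double_star_colouring_colouring[OF assms] unfolding connected_colouring_def by blast
qed

lemma f_attained:
  assumes "2 \<le> n" "connected_colouring k n c"
  obtains n' c' where "2 \<le> n'" "connected_colouring k n' c'" "f k = card (multicoloured_sets n' c')"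
proof -
  let ?X = "{card (multicoloured_sets n c) | n c. 2 \<le> n \<and> connected_colouring k n c}"
  have "f k \<in> ?X"
    unfolding f_def by (rule Inf_nat_def1) (use assms in blast)
  then show ?thesis using that by blast
qed

theorem corollary2:
  fixes k :: nat
  assumes "1 \<le> k"
  shows "real (f k) \<ge> real k * (real k - 2) / 3"
proof -
  have "2 \<le> 2 * k" using assms by simp
  then obtain n c where "2 \<le> n" "connected_colouring k n c" "f k = card (multicoloured_sets n c)"
    using f_attained double_star_colouring_connected[OF assms] by blast
  then have "k * k \<le> 3 * f k + 2 * k"
    using card_multicoloured_sets_lower_bound by simp
  then have "real (k * k) \<le> real (3 * f k + 2 * k)"
    by (simp only: of_nat_le_iff)
  then have "real k * (real k - 2) \<le> 3 * real (f k)"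
    by (simp add: right_diff_distrib)
  then show ?thesis by simp
qed

end
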